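(* Let $n\in\mathbb N$, let $f=\sum_{j\ge0}a_jz^j$ be extremal for $M_n$ with $f(0)>0$, and write $\log f(z)=\sum_{j\ge0}b_jz^j$ for a holomorphic logarithm of $f$. Let $P(z)=a_n+2\sum_{j=1}^na_{n-j}z^j$. If $\mathrm{Re}\,P$ vanishes at $n$ distinct points $z_1,\dots,z_n\in\partial\mathbb D$, then \[b_k=-\frac{2}{k}\sum_{j=1}^nz_j^k,\qquad 1\le k\le n.\]
   Context: $\mathbb D$ is the open unit disc; $\mathcal B_0=\{f$ holomorphic on $\mathbb D: 0<|f|\le1\}$; $M_n(f)=\mathrm{Re}\,a_n$; $f\in\mathcal B_0$ is extremal for $M_n$ if $M_n(f)\ge M_n(F)$ for all $F\in\mathcal B_0$ (for such $f$, $a_n>0$). *)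

theory Defs
  imports "HOL-Analysis.Analysis"
begin

definition taylor_coeff :: "(complex \<Rightarrow> complex) \<Rightarrow> nat \<Rightarrow> complex" where
  "taylor_coeff f j = (deriv ^^ j) f 0 / of_nat (fact j)"

definition B0 :: "(complex \<Rightarrow> complex) set" where
  "B0 = {f. f holomorphic_on ball 0 1 \<and> (\<forall>z\<in>ball 0 1. 0 < norm (f z) \<and> norm (f z) \<le> 1)}"

definition M :: "nat \<Rightarrow> (complex \<Rightarrow> complex) \<Rightarrow> real" where
  "M n f = Re (taylor_coeff f n)"

definition extremal :: "nat \<Rightarrow> (complex \<Rightarrow> complex) \<Rightarrow> bool" where
  "extremal n f \<longleftrightarrow> f \<in> B0 \<and> (\<forall>F\<in>B0. M n F \<le> M n f)"

end

(*
  Multiplying f by a unimodular constant, or by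
  1 / (1 + e (1 + w z) / (1 - w z)) with e > 0 and |w| = 1 (which maps the disc into itself
  and has no zeros), cannot increase Re a_n. The first variation shows that a_n is real, the
  second one, as e -> 0, that Re P >= 0 on the unit circle. There w^n Re P(w) = S(w) for a
  polynomial S of degree 2n with leading coefficient a_0, and each z_j is a minimum of Re P
  along the circle, hence a double zero of S. So S = a_0 prod_j (w - z_j)^2, i.e. a_0, ..., a_n
  are the first coefficients of a_0 prod_j (1 - z_j z)^2. Since f' = g' f, comparing with the
  logarithmic derivative sum_j -2 z_j / (1 - z_j z) of this product determines b_1, ..., b_n.
*)
theory Submission
  imports Defs "HOL-Complex_Analysis.Complex_Analysis" "HOL-Computational_Algebra.Polynomial_FPS"
begin

lemma taylor_coeff_eq_fps_nth:
  fixes F :: "complex fps"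
  assumes "f has_fps_expansion F"
  shows "taylor_coeff f k = F $ k"
  using fps_nth_fps_expansion[OF assms] by (simp add: taylor_coeff_def of_nat_fact)

lemma extremal_mult_le:
  fixes F \<Phi> :: "complex fps"
  assumes "extremal n f" "f has_fps_expansion F"
    and "\<phi> holomorphic_on ball 0 1" "\<phi> has_fps_expansion \<Phi>"
    and "\<And>z. z \<in> ball 0 1 \<Longrightarrow> \<phi> z \<noteq> 0 \<and> norm (\<phi> z) \<le> 1"
  shows "Re ((\<Phi> * F) $ n) \<le> Re (F $ n)"
proof -
  have "f \<in> B0" using assms(1) by (simp add: extremal_def)
  then have "(\<lambda>z. \<phi> z * f z) \<in> B0"
    using assms(3,5) by (auto simp: B0_def norm_mult intro!: holomorphic_intros mult_le_one)
  then have "M n (\<lambda>z. \<phi> z * f z) \<le> M n f"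
    using assms(1) by (simp add: extremal_def)
  moreover have "(\<lambda>z. \<phi> z * f z) has_fps_expansion \<Phi> * F"
    using assms(4,2) by (rule has_fps_expansion_mult)
  ultimately show ?thesis
    using assms(2) by (simp add: M_def taylor_coeff_eq_fps_nth)
qed

lemma extremal_fps_nth_0_nonzero:
  fixes F :: "complex fps"
  assumes "extremal n f" "f has_fps_expansion F"
  shows "F $ 0 \<noteq> 0"
proof -
  have "F $ 0 = f 0"
    using taylor_coeff_eq_fps_nth[OF assms(2), of 0] by (simp add: taylor_coeff_def)
  moreover have "f \<in> B0" using assms(1) by (simp add: extremal_def)
  ultimately show ?thesis by (auto simp: B0_def)
qed

lemma extremal_Im_fps_nth_eq_0:
  fixes F :: "complex fps"
  assumes "extremal n f" "f has_fps_expansion F"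
  shows "Im (F $ n) = 0"
proof -
  define a where "a = F $ n"
  define c where "c = cnj a / norm a"
  show ?thesis
  proof (cases "a = 0")
    case False
    then have "norm c = 1" by (simp add: c_def norm_divide)
    then have "Re ((fps_const c * F) $ n) \<le> Re (F $ n)"
      by (intro extremal_mult_le[OF assms]) auto
    moreover have "c * a = norm a"
      using False by (simp add: c_def mult.commute[of "cnj a"] complex_norm_square[symmetric] power2_eq_square)
    ultimately have "norm a \<le> Re a" by (simp only: a_def fps_mult_left_const_nth) simp
    then have "norm a = Re a" using complex_Re_le_cmod[of a] by linarith
    then show ?thesis by (simp add: norm_eq_Re_iff complex_nonneg_Reals_iff a_def)
  qed (simp add: a_def)
qed

lemma has_fps_expansion_linear_fraction:
  fixes u w :: complex
  shows "(\<lambda>z. (1 + w * z) / (1 - u * z)) has_fps_expansion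
           (1 + fps_const w * fps_X) * Abs_fps (\<lambda>k. u ^ k)"
proof -
  have "(\<lambda>z. (1 + w * z) / (1 - u * z)) has_fps_expansion
          (1 + fps_const w * fps_X) / (1 - fps_const u * fps_X)"
    by (intro fps_expansion_intros) auto
  also have "(1 + fps_const w * fps_X) / (1 - fps_const u * fps_X)
           = (1 + fps_const w * fps_X) * Abs_fps (\<lambda>k. u ^ k)"
    using one_minus_const_fps_X_neg_power'[of 1 u] by (simp add: fps_divide_unit)
  finally show ?thesis .
qed

lemma linear_fraction_fps_nth:
  fixes u w :: complex
  shows "((1 + fps_const w * fps_X) * Abs_fps (\<lambda>k. u ^ k)) $ k
           = (if k = 0 then 1 else u ^ k + w * u ^ (k - 1))"
  by (simp add: distrib_right mult.assoc)

lemma norm_le_norm_add_nonneg_multiple: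
  fixes A B :: complex and e :: real
  assumes "0 \<le> e" "0 \<le> Re (B * cnj A)"
  shows "norm A \<le> norm (A + of_real e * B)"
proof -
  have "(norm (A + of_real e * B))\<^sup>2
      = (norm A)\<^sup>2 + 2 * e * Re (B * cnj A) + e\<^sup>2 * (norm B)\<^sup>2"
    unfolding cmod_power2 by (simp add: power2_eq_square algebra_simps)
  also have "\<dots> \<ge> (norm A)\<^sup>2" using assms by simp
  finally show ?thesis by (rule power2_le_imp_le) simp
qed

(* The function below is 1 / (1 + e (1 + w z) / (1 - w z)), rewritten as 1 minus a multiple
   of a linear fraction so that its power series is explicit. *)
lemma linear_fraction_perturbation_in_disc:
  fixes e :: real and w z :: complex
  assumes "0 < e" "norm w = 1" "norm z < 1"
  defines "u \<equiv> of_real ((1 - e) / (1 + e)) * w"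
  shows "1 - u * z \<noteq> 0"
    and "1 - of_real (e / (1 + e)) * ((1 + w * z) / (1 - u * z)) \<noteq> 0"
    and "norm (1 - of_real (e / (1 + e)) * ((1 + w * z) / (1 - u * z))) \<le> 1"
proof -
  define s where "s = w * z"
  have s: "norm s < 1" using assms(2,3) by (simp add: s_def norm_mult)
  then have "1 - s \<noteq> 0" by auto
  have "norm u = \<bar>(1 - e) / (1 + e)\<bar>"
    by (simp only: u_def norm_mult norm_of_real assms(2) mult_1_right)
  also have "\<dots> \<le> 1"
    using assms(1) by (simp add: abs_divide divide_le_eq_1)
  finally have "norm (u * z) < 1"
    using assms(3) mult_left_le_one_le[of "norm z" "norm u"] by (simp add: norm_mult)
  then show uz: "1 - u * z \<noteq> 0" by auto
  have "Re ((1 + s) * cnj (1 - s)) = 1 - (norm s)\<^sup>2"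
    unfolding cmod_power2 by (simp add: algebra_simps power2_eq_square)
  then have "0 \<le> Re ((1 + s) * cnj (1 - s))"
    using s by (simp add: power_le_one)
  then have le: "norm (1 - s) \<le> norm ((1 - s) + of_real e * (1 + s))"
    using assms(1) by (intro norm_le_norm_add_nonneg_multiple) auto
  have e1: "1 + complex_of_real e \<noteq> 0"
    using assms(1) by (simp add: complex_eq_iff)
  have den: "(1 + of_real e) * (1 - u * z) = (1 - s) + of_real e * (1 + s)"
    using e1 by (simp add: u_def s_def field_simps)
  then have den0: "(1 - s) + of_real e * (1 + s) \<noteq> 0"
    using e1 uz by (metis no_zero_divisors)
  have "1 - of_real (e / (1 + e)) * ((1 + w * z) / (1 - u * z))
      = 1 - of_real e * (1 + s) / ((1 + of_real e) * (1 - u * z))"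
    by (simp add: s_def)
  also have "\<dots> = (1 - s) / ((1 - s) + of_real e * (1 + s))"
    unfolding den using den0 by (simp add: field_simps)
  finally have "1 - of_real (e / (1 + e)) * ((1 + w * z) / (1 - u * z))
      = (1 - s) / ((1 - s) + of_real e * (1 + s))" .
  then show "1 - of_real (e / (1 + e)) * ((1 + w * z) / (1 - u * z)) \<noteq> 0"
    and "norm (1 - of_real (e / (1 + e)) * ((1 + w * z) / (1 - u * z))) \<le> 1"
    using le \<open>1 - s \<noteq> 0\<close> by (auto simp: norm_divide divide_le_eq_1)
qed

lemma extremal_perturbation_coeff_nonneg:
  fixes F :: "complex fps" and e :: real
  assumes "extremal n f" "f has_fps_expansion F" "norm w = 1" "0 < e"
  defines "u \<equiv> of_real ((1 - e) / (1 + e)) * w"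
  shows "0 \<le> Re (((1 + fps_const w * fps_X) * Abs_fps (\<lambda>k. u ^ k) * F) $ n)"
proof -
  define c where "c = complex_of_real (e / (1 + e))"
  define H where "H = (1 + fps_const w * fps_X) * Abs_fps (\<lambda>k. u ^ k)"
  define \<phi> where "\<phi> z = 1 - c * ((1 + w * z) / (1 - u * z))" for z
  note perturbation = linear_fraction_perturbation_in_disc[OF assms(4,3), folded u_def c_def]
  have "\<phi> has_fps_expansion 1 - fps_const c * H"
    unfolding \<phi>_def H_def by (intro fps_expansion_intros has_fps_expansion_linear_fraction)
  moreover have "\<phi> holomorphic_on ball 0 1"
    using perturbation(1) unfolding \<phi>_def by (intro holomorphic_intros) auto
  moreover have "\<phi> z \<noteq> 0 \<and> norm (\<phi> z) \<le> 1" if "z \<in> ball 0 1" for z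
    using that perturbation(2,3) unfolding \<phi>_def mem_ball_0 by blast
  ultimately have "Re (((1 - fps_const c * H) * F) $ n) \<le> Re (F $ n)"
    by (intro extremal_mult_le[OF assms(1,2)])
  moreover have "((1 - fps_const c * H) * F) $ n = F $ n - c * (H * F) $ n"
    by (simp only: left_diff_distrib mult_1 mult.assoc fps_sub_nth fps_mult_left_const_nth)
  ultimately have "0 \<le> e / (1 + e) * Re ((H * F) $ n)"
    by (simp add: c_def del: of_real_divide)
  then show ?thesis
    using assms(4) by (simp add: H_def zero_le_mult_iff zero_le_divide_iff)
qed

lemma extremal_Re_boundary_poly_nonneg:
  fixes F :: "complex fps"
  assumes "extremal n f" "f has_fps_expansion F" "norm w = 1"
  shows "0 \<le> Re (F $ n + 2 * (\<Sum>i=1..n. F $ (n - i) * w ^ i))"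
proof -
  define u where "u e = of_real ((1 - e) / (1 + e)) * w" for e :: real
  define Q where "Q e = (\<Sum>i=0..n. (if i = 0 then 1 else u e ^ i + w * u e ^ (i - 1)) * F $ (n - i))"
    for e
  \<comment> \<open>\<open>Q e\<close> is the coefficient bounded in the previous lemma; at \<open>e = 0\<close> it is the
    \<open>n\<close>-th coefficient of \<open>F\<close> times the expansion of \<open>(1 + w z) / (1 - w z)\<close>, i.e. \<open>P(w)\<close>.\<close>
  have "Q e = (((1 + fps_const w * fps_X) * Abs_fps (\<lambda>k. u e ^ k)) * F) $ n" for e
    by (simp only: Q_def fps_mult_nth[of _ F] linear_fraction_fps_nth)
  then have "0 \<le> Re (Q e)" if "0 < e" for e
    using extremal_perturbation_coeff_nonneg[OF assms that] by (simp add: u_def)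
  moreover have "isCont u 0"
    unfolding u_def by (intro continuous_intros) auto
  then have "isCont (\<lambda>e. if i = 0 then 1 else u e ^ i + w * u e ^ (i - 1)) 0" for i
    by (cases "i = 0") (auto intro!: continuous_intros)
  then have "isCont Q 0"
    unfolding Q_def by (intro continuous_intros)
  then have "((\<lambda>e. Re (Q e)) \<longlongrightarrow> Re (Q 0)) (at_right 0)"
    by (intro tendsto_Re) (simp add: isCont_def filterlim_at_split)
  ultimately have "0 \<le> Re (Q 0)"
    by (intro tendsto_lowerbound[of "\<lambda>e. Re (Q e)"])
       (auto simp: eventually_at_right_field intro!: exI[of _ 1])
  moreover have "Q 0 = F $ n + 2 * (\<Sum>i=1..n. F $ (n - i) * w ^ i)"
  proof -
    have "Q 0 = F $ n + (\<Sum>i=1..n. (w ^ i + w * w ^ (i - 1)) * F $ (n - i))"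
      by (simp add: Q_def u_def sum.atLeast_Suc_atMost)
    also have "\<dots> = F $ n + (\<Sum>i=1..n. 2 * (F $ (n - i) * w ^ i))"
      by (intro arg_cong2[where f = "(+)"] sum.cong refl) (auto simp: power_eq_if)
    finally show ?thesis by (simp add: sum_distrib_left)
  qed
  ultimately show ?thesis by simp
qed

lemma has_vector_derivative_real_min_eq_0:
  fixes q :: "real \<Rightarrow> complex"
  assumes "(q has_vector_derivative D) (at t0)"
    and "\<And>t. q t \<in> \<real>" and "\<And>t. Re (q t0) \<le> Re (q t)"
  shows "D = 0"
proof -
  have "((\<lambda>t. Re (q t)) has_real_derivative Re D) (at t0)"
    using assms(1) by (rule has_field_derivative_Re)
  then have "Re D = 0"
    by (rule DERIV_local_min[of _ _ _ 1]) (use assms(3) in auto)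
  have "((\<lambda>t. Im (q t)) has_real_derivative Im D) (at t0)"
    using assms(1) by (rule has_field_derivative_Im)
  moreover have "(\<lambda>t. Im (q t)) = (\<lambda>t. 0)"
    using assms(2) by (simp add: complex_is_Real_iff)
  ultimately have "Im D = 0"
    using DERIV_const DERIV_unique by metis
  with \<open>Re D = 0\<close> show ?thesis by (simp add: complex_eq_iff)
qed

lemma poly_pderiv_eq_0_at_circle_min:
  fixes S :: "complex poly"
  assumes "norm z = 1" "poly S z = 0"
    and "\<And>w. norm w = 1 \<Longrightarrow> poly S w / w ^ n \<in> \<real> \<and> 0 \<le> Re (poly S w / w ^ n)"
  shows "poly (pderiv S) z = 0"
proof -
  define \<gamma> where "\<gamma> t = z * cis t" for t
  have z: "z \<noteq> 0" using assms(1) by auto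
  have "(\<gamma> has_vector_derivative z * \<i>) (at 0)"
    unfolding \<gamma>_def has_vector_derivative_def
    by (auto intro!: derivative_eq_intros simp: algebra_simps)
  moreover have "((\<lambda>w. poly S w / w ^ n) has_field_derivative poly (pderiv S) z / z ^ n) (at (\<gamma> 0))"
    using z assms(2) unfolding \<gamma>_def
    by (auto intro!: derivative_eq_intros poly_DERIV simp: field_simps power2_eq_square)
  ultimately have "((\<lambda>w. poly S w / w ^ n) \<circ> \<gamma> has_vector_derivative
                     z * \<i> * (poly (pderiv S) z / z ^ n)) (at 0)"
    by (rule field_vector_diff_chain_at)
  moreover have "norm (\<gamma> t) = 1" for t
    using assms(1) by (simp add: \<gamma>_def norm_mult)
  ultimately have "z * \<i> * (poly (pderiv S) z / z ^ n) = 0"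
    using assms(2,3) by (intro has_vector_derivative_real_min_eq_0) (auto simp: \<gamma>_def)
  then show ?thesis using z by simp
qed

definition boundary_poly :: "(nat \<Rightarrow> complex) \<Rightarrow> nat \<Rightarrow> complex poly" where
  "boundary_poly a n =
     monom (a n) n + (\<Sum>i=1..n. monom (a (n - i)) (n + i) + monom (cnj (a (n - i))) (n - i))"

lemma poly_boundary_poly:
  assumes "Im (a n) = 0" "norm w = 1"
  shows "poly (boundary_poly a n) w = w ^ n * of_real (Re (a n + 2 * (\<Sum>i=1..n. a (n - i) * w ^ i)))"
proof -
  have "w ^ (n - i) = w ^ n * cnj (w ^ i)" if "i \<le> n" for i
  proof -
    have "w * cnj w = 1" using assms(2) complex_norm_square[of w] by simp
    have "w ^ n = w ^ (n - i) * w ^ i" using that by (simp flip: power_add)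
    then have "w ^ n * cnj (w ^ i) = w ^ (n - i) * (w * cnj w) ^ i"
      by (simp add: power_mult_distrib mult.assoc)
    with \<open>w * cnj w = 1\<close> show ?thesis by simp
  qed
  then have "poly (boundary_poly a n) w
      = w ^ n * (a n + (\<Sum>i=1..n. a (n - i) * w ^ i + cnj (a (n - i) * w ^ i)))"
    by (simp add: boundary_poly_def poly_sum poly_monom power_add sum_distrib_left algebra_simps)
  also have "(\<Sum>i=1..n. a (n - i) * w ^ i + cnj (a (n - i) * w ^ i))
      = of_real (2 * (\<Sum>i=1..n. Re (a (n - i) * w ^ i)))"
    by (simp only: complex_add_cnj of_real_sum sum_distrib_left)
  finally show ?thesis
    using assms(1) by (simp add: complex_eq_iff)
qed

lemma coeff_boundary_poly:
  assumes "n \<le> k"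
  shows "coeff (boundary_poly a n) k = (if k \<le> 2 * n then a (2 * n - k) else 0)"
proof -
  have "coeff (boundary_poly a n) k
      = (if n = k then a n else 0) + (\<Sum>i=1..n. if i = k - n then a (n - i) else 0)"
    unfolding boundary_poly_def coeff_add coeff_sum coeff_monom
    by (rule arg_cong2[where f = "(+)"], simp, rule sum.cong) (use assms in auto)
  then show ?thesis
    using assms by (auto simp: mult_2)
qed

lemma extremal_boundary_poly_double_root:
  fixes F :: "complex fps"
  assumes "extremal n f" "f has_fps_expansion F" "norm z = 1"
    and "Re (F $ n + 2 * (\<Sum>i=1..n. F $ (n - i) * z ^ i)) = 0"
  defines "S \<equiv> boundary_poly (($) F) n"
  shows "poly S z = 0" and "poly (pderiv S) z = 0"
proof -
  have poly_S: "poly S w / w ^ n = of_real (Re (F $ n + 2 * (\<Sum>i=1..n. F $ (n - i) * w ^ i)))"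
    if "norm w = 1" for w
    using that poly_boundary_poly[of "($) F" n w] extremal_Im_fps_nth_eq_0[OF assms(1,2)]
    by (auto simp: S_def)
  have "poly S z / z ^ n = 0"
    using poly_S[OF assms(3)] unfolding assms(4) by simp
  then show "poly S z = 0"
    using assms(3) by auto
  moreover have "poly S w / w ^ n \<in> \<real> \<and> 0 \<le> Re (poly S w / w ^ n)" if "norm w = 1" for w
    unfolding poly_S[OF that] using extremal_Re_boundary_poly_nonneg[OF assms(1,2) that] by simp
  ultimately show "poly (pderiv S) z = 0"
    using assms(3) by (intro poly_pderiv_eq_0_at_circle_min[where n = n])
qed

lemma prod_power2_linear_dvd_of_double_roots:
  fixes p :: "complex poly"
  assumes "finite A" "p \<noteq> 0" "\<And>x. x \<in> A \<Longrightarrow> poly p x = 0 \<and> poly (pderiv p) x = 0"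
  shows "(\<Prod>x\<in>A. [:-x, 1:] ^ 2) dvd p"
  using assms(1,3)
proof (induction A rule: finite_induct)
  case empty
  then show ?case by simp
next
  case (insert a A)
  then obtain q where q: "p = (\<Prod>x\<in>A. [:-x, 1:] ^ 2) * q"
    by (auto elim!: dvdE)
  have "2 \<le> order a p"
  proof (cases "pderiv p = 0")
    case True
    then obtain c where "p = [:c:]" using pderiv_iszero by blast
    then show ?thesis using insert.prems[of a] assms(2) by simp
  next
    case False
    then have "order a (pderiv p) \<noteq> 0"
      using insert.prems order_root by blast
    then show ?thesis
      using order_pderiv[OF assms(2)] insert.prems by fastforce
  qed
  moreover have "order a (\<Prod>x\<in>A. [:-x, 1:] ^ 2) = 0"
    using insert.hyps by (intro order_0I) (auto simp: poly_prod)
  ultimately have "2 \<le> order a q"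
    using order_mult[of "\<Prod>x\<in>A. [:-x, 1:] ^ 2" q a] q assms(2) by simp
  then have "[:-a, 1:] ^ 2 dvd q"
    using order_divides by blast
  then show ?case
    using insert.hyps q by (simp add: mult.commute mult_dvd_mono)
qed

lemma reflect_poly_eq_of_double_roots:
  fixes S :: "complex poly"
  assumes "finite A" "inj_on z A" "S \<noteq> 0" "degree S \<le> 2 * card A"
    and "\<And>j. j \<in> A \<Longrightarrow> poly S (z j) = 0 \<and> poly (pderiv S) (z j) = 0"
  shows "degree S = 2 * card A"
    and "reflect_poly S = smult (lead_coeff S) (\<Prod>j\<in>A. [:1, - z j:] ^ 2)"
proof -
  define Q where "Q = (\<Prod>j\<in>A. [:- z j, 1:] ^ 2)"
  have "(\<Prod>x\<in>z ` A. [:-x, 1:] ^ 2) dvd S"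
    using assms by (intro prod_power2_linear_dvd_of_double_roots) auto
  then obtain r where r: "S = Q * r"
    using assms(2) by (auto simp: Q_def prod.reindex elim!: dvdE)
  have "degree Q = 2 * card A"
    unfolding Q_def by (subst degree_prod_eq_sum_degree) (auto simp: degree_linear_power)
  moreover have "r \<noteq> 0" "Q \<noteq> 0" using r assms(3) by auto
  ultimately have "degree r = 0" "degree S = 2 * card A"
    using degree_mult_eq[of Q r] r assms(4) by simp_all
  then show "degree S = 2 * card A" by simp
  from \<open>degree r = 0\<close> obtain c where "r = [:c:]" by (elim degree_eq_zeroE)
  moreover have "lead_coeff Q = 1"
    unfolding Q_def by (simp add: lead_coeff_prod lead_coeff_power)
  ultimately have "S = smult (lead_coeff S) Q" using r by simp
  then have "reflect_poly S = smult (lead_coeff S) (reflect_poly Q)"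
    by (metis reflect_poly_smult)
  moreover have "reflect_poly [:- x, 1:] = [:1, - x:]" for x :: complex
    by (rule poly_eqI) (auto simp: coeff_reflect_poly coeff_pCons split: nat.split)
  ultimately show "reflect_poly S = smult (lead_coeff S) (\<Prod>j\<in>A. [:1, - z j:] ^ 2)"
    by (simp add: Q_def reflect_poly_prod reflect_poly_power)
qed

lemma extremal_coeffs_eq_prod:
  fixes F :: "complex fps" and z :: "nat \<Rightarrow> complex"
  assumes "extremal n f" "f has_fps_expansion F"
    and "inj_on z {1..n}" "\<And>j. j \<in> {1..n} \<Longrightarrow> norm (z j) = 1"
    and "\<And>j. j \<in> {1..n} \<Longrightarrow> Re (F $ n + 2 * (\<Sum>i=1..n. F $ (n - i) * z j ^ i)) = 0"
    and "m \<le> n"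
  shows "F $ m = F $ 0 * coeff (\<Prod>j\<in>{1..n}. [:1, - z j:] ^ 2) m"
proof -
  define S where "S = boundary_poly (($) F) n"
  have coeff_S: "coeff S k = (if k \<le> 2 * n then F $ (2 * n - k) else 0)" if "n \<le> k" for k
    unfolding S_def using that by (rule coeff_boundary_poly)
  have "degree S \<le> 2 * n"
    by (rule degree_le) (simp add: coeff_S)
  moreover have "S \<noteq> 0"
    using coeff_S[of "2 * n"] extremal_fps_nth_0_nonzero[OF assms(1,2)] by auto
  moreover have "poly S (z j) = 0 \<and> poly (pderiv S) (z j) = 0" if "j \<in> {1..n}" for j
    using extremal_boundary_poly_double_root[OF assms(1,2) assms(4,5)[OF that]] by (simp add: S_def)
  ultimately have deg: "degree S = 2 * n"
    and reflect: "reflect_poly S = smult (lead_coeff S) (\<Prod>j\<in>{1..n}. [:1, - z j:] ^ 2)"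
    using reflect_poly_eq_of_double_roots[of "{1..n}" z S] assms(3) by auto
  have "F $ m = coeff S (2 * n - m)"
    using assms(6) by (simp add: coeff_S)
  also have "\<dots> = coeff (reflect_poly S) m"
    using assms(6) deg by (simp add: coeff_reflect_poly)
  also have "\<dots> = F $ 0 * coeff (\<Prod>j\<in>{1..n}. [:1, - z j:] ^ 2) m"
    unfolding reflect deg using coeff_S[of "2 * n"] by simp
  finally show ?thesis .
qed

lemma fps_deriv_prod_of_log_derivs:
  fixes F H :: "'b \<Rightarrow> 'a::comm_ring_1 fps"
  assumes "finite A" "\<And>j. j \<in> A \<Longrightarrow> fps_deriv (F j) = H j * F j"
  shows "fps_deriv (\<Prod>j\<in>A. F j) = (\<Sum>j\<in>A. H j) * (\<Prod>j\<in>A. F j)"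
  using assms
proof (induction A rule: finite_induct)
  case (insert a A)
  then show ?case
    by (simp add: algebra_simps)
qed simp

lemma fps_deriv_prod_power2_linear:
  fixes z :: "'b \<Rightarrow> 'a::field_char_0"
  assumes "finite A"
  shows "fps_deriv (fps_of_poly (\<Prod>j\<in>A. [:1, - z j:] ^ 2))
           = (\<Sum>j\<in>A. fps_const (- 2 * z j) * Abs_fps (\<lambda>k. z j ^ k))
             * fps_of_poly (\<Prod>j\<in>A. [:1, - z j:] ^ 2)"
proof -
  have deriv_factor: "fps_deriv ((1 - fps_const u * fps_X) ^ 2)
      = fps_const (- 2 * u) * Abs_fps (\<lambda>k. u ^ k) * (1 - fps_const u * fps_X) ^ 2" for u :: 'a
  proof -
    define L where "L = 1 - fps_const u * fps_X"
    have "fps_deriv (L ^ 2) = fps_const (- 2 * u) * L"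
      by (simp add: L_def power2_eq_square algebra_simps)
    also have "L * Abs_fps (\<lambda>k. u ^ k) = 1"
      using inverse_mult_eq_1'[of L] one_minus_const_fps_X_neg_power'[of 1 u] by (simp add: L_def)
    then have "fps_const (- 2 * u) * L = fps_const (- 2 * u) * L * (L * Abs_fps (\<lambda>k. u ^ k))"
      by simp
    finally show ?thesis
      unfolding L_def[symmetric] by (simp add: power2_eq_square ac_simps)
  qed
  have "fps_of_poly (\<Prod>j\<in>A. [:1, - z j:] ^ 2) = (\<Prod>j\<in>A. (1 - fps_const (z j) * fps_X) ^ 2)"
    by (simp add: fps_of_poly_prod fps_of_poly_power fps_of_poly_pCons flip: fps_const_neg)
  then show ?thesis
    using assms deriv_factor by (simp add: fps_deriv_prod_of_log_derivs)
qed

lemma fps_nth_log_deriv_eq: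
  fixes A B D E :: "'a::field fps"
  assumes "fps_deriv A = D * A" "fps_deriv B = E * B" "B $ 0 \<noteq> 0" "c \<noteq> 0"
    and "\<And>m. m \<le> n \<Longrightarrow> A $ m = c * B $ m" "m < n"
  shows "D $ m = E $ m"
proof -
  have DB_eq: "((D - E) * B) $ k = 0" if "k < n" for k
  proof -
    have "c * (D * B) $ k = (D * A) $ k"
      using that assms(5) by (simp add: fps_mult_nth sum_distrib_left algebra_simps)
    also have "\<dots> = fps_deriv A $ k"
      by (simp only: assms(1))
    also have "\<dots> = c * fps_deriv B $ k"
      using that assms(5)[of "Suc k"] by simp
    also have "\<dots> = c * (E * B) $ k"
      by (simp only: assms(2))
    finally show ?thesis
      using assms(4) by (simp add: algebra_simps)
  qed
  have "D - E = (D - E) * B * inverse B"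
    using assms(3) by (simp add: mult.assoc inverse_mult_eq_1')
  then have "(D - E) $ m = (\<Sum>i=0..m. ((D - E) * B) $ i * inverse B $ (m - i))"
    by (metis fps_mult_nth)
  also have "\<dots> = 0"
    using assms(6) DB_eq by simp
  finally show ?thesis by simp
qed

lemma fps_deriv_fps_expansion_of_log:
  fixes f g :: "complex \<Rightarrow> complex"
  assumes "open U" "0 \<in> U" "g holomorphic_on U" "\<And>w. w \<in> U \<Longrightarrow> exp (g w) = f w"
  shows "fps_deriv (fps_expansion f 0) = fps_deriv (fps_expansion g 0) * fps_expansion f 0"
proof -
  have "(\<lambda>w. exp (g w)) holomorphic_on U"
    using assms(3) by (intro holomorphic_intros)
  then have "f holomorphic_on U"
    using assms(4) by (rule holomorphic_transform)
  then have f: "f has_fps_expansion fps_expansion f 0" and g: "g has_fps_expansion fps_expansion g 0"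
    using assms by auto
  have "deriv f w = deriv g w * f w" if "w \<in> U" for w
  proof -
    have "deriv f w = deriv (\<lambda>x. exp (g x)) w"
      using that assms(1,4) by (intro deriv_cong_ev) (auto simp: eventually_nhds)
    also have "\<dots> = exp (g w) * deriv g w"
    proof (rule DERIV_imp_deriv)
      have "(g has_field_derivative deriv g w) (at w)"
        using assms(3,1) that by (rule holomorphic_derivI)
      then show "((\<lambda>x. exp (g x)) has_field_derivative exp (g w) * deriv g w) (at w)"
        by (auto intro!: derivative_eq_intros)
    qed
    finally show ?thesis using assms(4)[OF that] by simp
  qed
  then have "eventually (\<lambda>w. deriv g w * f w = deriv f w) (nhds 0)"
    using assms(1,2) by (auto simp: eventually_nhds)
  moreover have "(\<lambda>w. deriv g w * f w) has_fps_expansion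
                   fps_deriv (fps_expansion g 0) * fps_expansion f 0"
    using f g by (intro fps_expansion_intros)
  ultimately have "deriv f has_fps_expansion fps_deriv (fps_expansion g 0) * fps_expansion f 0"
    using has_fps_expansion_cong[of "\<lambda>w. deriv g w * f w" "deriv f"] by blast
  moreover have "deriv f has_fps_expansion fps_deriv (fps_expansion f 0)"
    using f by (rule has_fps_expansion_deriv)
  ultimately show ?thesis
    using fps_expansion_eqI by metis
qed

lemma fps_nth_log_eq_power_sum:
  fixes F G :: "'a::field_char_0 fps" and z :: "'b \<Rightarrow> 'a"
  assumes "finite A" "fps_deriv F = fps_deriv G * F" "F $ 0 \<noteq> 0"
    and "\<And>m. m \<le> n \<Longrightarrow> F $ m = F $ 0 * coeff (\<Prod>j\<in>A. [:1, - z j:] ^ 2) m"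
    and "k \<in> {1..n}"
  shows "G $ k = - (2 / of_nat k) * (\<Sum>j\<in>A. z j ^ k)"
proof -
  define R where "R = fps_of_poly (\<Prod>j\<in>A. [:1, - z j:] ^ 2)"
  define H where "H = (\<Sum>j\<in>A. fps_const (- 2 * z j) * Abs_fps (\<lambda>k. z j ^ k))"
  have deriv_R: "fps_deriv R = H * R"
    unfolding R_def H_def using assms(1) by (rule fps_deriv_prod_power2_linear)
  have "R $ 0 = 1"
    unfolding R_def fps_of_poly_nth poly_0_coeff_0 [symmetric] by (simp add: poly_prod)
  obtain m where k: "k = Suc m" "m < n"
    using assms(5) by (cases k) auto
  have coeffs: "F $ m = F $ 0 * R $ m" if "m \<le> n" for m
    using assms(4)[OF that] by (simp add: R_def)
  have "fps_deriv G $ m = H $ m"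
    by (rule fps_nth_log_deriv_eq[OF assms(2) deriv_R _ assms(3) coeffs k(2)]) (simp add: \<open>R $ 0 = 1\<close>)
  then have "of_nat k * G $ k = - 2 * (\<Sum>j\<in>A. z j ^ k)"
    using k by (simp add: H_def fps_sum_nth sum_distrib_left mult.assoc)
  then show ?thesis
    using k by (simp add: field_simps del: of_nat_Suc)
qed

theorem corollary4:
  fixes n :: nat and f g :: "complex \<Rightarrow> complex" and z :: "nat \<Rightarrow> complex"
  assumes "extremal n f"
    and "f 0 \<in> \<real>" and "Re (f 0) > 0"
    and "g holomorphic_on ball 0 1" and "\<And>w. w \<in> ball 0 1 \<Longrightarrow> exp (g w) = f w"
    and "inj_on z {1..n}"
    and "\<And>j. j \<in> {1..n} \<Longrightarrow> norm (z j) = 1"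
    and "\<And>j. j \<in> {1..n} \<Longrightarrow>
           Re (taylor_coeff f n + 2 * (\<Sum>i=1..n. taylor_coeff f (n - i) * z j ^ i)) = 0"
  shows "\<forall>k\<in>{1..n}. taylor_coeff g k = - (2 / of_nat k) * (\<Sum>j=1..n. z j ^ k)"
proof
  fix k assume k: "k \<in> {1..n}"
  define F where "F = fps_expansion f 0"
  define G where "G = fps_expansion g 0"
  have "f holomorphic_on ball 0 1"
    using assms(1) by (simp add: extremal_def B0_def)
  then have F: "f has_fps_expansion F"
    unfolding F_def by (intro has_fps_expansion_fps_expansion[of "ball 0 1"]) auto
  have G: "g has_fps_expansion G"
    unfolding G_def using assms(4) by (intro has_fps_expansion_fps_expansion[of "ball 0 1"]) auto
  have "Re (F $ n + 2 * (\<Sum>i=1..n. F $ (n - i) * z j ^ i)) = 0" if "j \<in> {1..n}" for j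
    using assms(8)[OF that] by (simp only: taylor_coeff_eq_fps_nth[OF F])
  then have coeffs: "F $ m = F $ 0 * coeff (\<Prod>j\<in>{1..n}. [:1, - z j:] ^ 2) m" if "m \<le> n" for m
    using that by (intro extremal_coeffs_eq_prod[OF assms(1) F assms(6,7)])
  have "fps_deriv F = fps_deriv G * F"
    unfolding F_def G_def using assms(4,5) by (intro fps_deriv_fps_expansion_of_log) auto
  from finite_atLeastAtMost this extremal_fps_nth_0_nonzero[OF assms(1) F] coeffs k
  show "taylor_coeff g k = - (2 / of_nat k) * (\<Sum>j=1..n. z j ^ k)"
    unfolding taylor_coeff_eq_fps_nth[OF G] by (rule fps_nth_log_eq_power_sum)
qed

end
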